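(* Let $A$ be a nonempty finite set with $|A|=n$, let $\Sigma\in\mathbb{R}$, and let $d$ be a metric on $A$. Then the function $\sigma:A^2\to\mathbb{R}$ defined by $$\sigma(x,y)=d(x,\cdot)+d(y,\cdot)-d(x,y)-d(\cdot,\cdot)+\frac{\Sigma}{n}$$ is a $\Sigma$-proximity on $A$.
   Context: A metric on $A$ is a function $d:A^2\to\mathbb{R}$ such that for all $x,y,z\in A$: $d(x,y)=0$ iff $x=y$, and $d(x,y)+d(x,z)-d(y,z)\ge 0$. Notation: $d(x,\cdot)=\frac1n\sum_{t\in A}d(x,t)$ and $d(\cdot,\cdot)=\frac1{n^2}\sum_{s,t\in A}d(s,t)$. For a real number $\Sigma$, a function $\sigma:A^2\to\mathbb{R}$ is a $\Sigma$-proximity on $A$ if for all $x,y,z\in A$: (1) $\sum_{t\in A}\sigma(x,t)=\Sigma$; (2) $\sigma(x,y)+\sigma(x,z)-\sigma(y,z)\le\sigma(x,x)$, with strict inequality whenever $z=y$ and $x\ne y$. *)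

theory Defs
  imports Complex_Main
begin

definition metric_on :: "'a set \<Rightarrow> ('a \<Rightarrow> 'a \<Rightarrow> real) \<Rightarrow> bool" where
  "metric_on A d \<longleftrightarrow>
     (\<forall>x\<in>A. \<forall>y\<in>A. d x y = 0 \<longleftrightarrow> x = y) \<and>
     (\<forall>x\<in>A. \<forall>y\<in>A. \<forall>z\<in>A. d x y + d x z - d y z \<ge> 0)"

definition avg_dist :: "'a set \<Rightarrow> ('a \<Rightarrow> 'a \<Rightarrow> real) \<Rightarrow> 'a \<Rightarrow> real" where
  "avg_dist A d x = (\<Sum>t\<in>A. d x t) / real (card A)"

definition avg_all :: "'a set \<Rightarrow> ('a \<Rightarrow> 'a \<Rightarrow> real) \<Rightarrow> real" where
  "avg_all A d = (\<Sum>s\<in>A. \<Sum>t\<in>A. d s t) / (real (card A))^2"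

definition proximity_on :: "real \<Rightarrow> 'a set \<Rightarrow> ('a \<Rightarrow> 'a \<Rightarrow> real) \<Rightarrow> bool" where
  "proximity_on \<Sigma> A \<sigma> \<longleftrightarrow>
     (\<forall>x\<in>A. (\<Sum>t\<in>A. \<sigma> x t) = \<Sigma>) \<and>
     (\<forall>x\<in>A. \<forall>y\<in>A. \<forall>z\<in>A. \<sigma> x y + \<sigma> x z - \<sigma> y z \<le> \<sigma> x x) \<and>
     (\<forall>x\<in>A. \<forall>y\<in>A. x \<noteq> y \<longrightarrow> \<sigma> x y + \<sigma> x y - \<sigma> y y < \<sigma> x x)"

end

theory Submission
  imports Defs
begin

text \<open>Subtracting d turns the triangle condition of a proximity into the triangle
  inequality for d and the strict condition into positivity of d off the diagonal, since
  terms of the form f x + f y + c cancel there. Adding the averages double-centres d, so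
  their only role is to make every row of \<sigma> sum to \<Sigma>.\<close>

lemma metric_on_pos:
  assumes "metric_on A d" and "x \<in> A" and "y \<in> A" and "x \<noteq> y"
  shows "d x y > 0"
proof -
  have "d x y + d x y - d y y \<ge> 0" and "d y y = 0" and "d x y \<noteq> 0"
    using assms unfolding metric_on_def by blast+
  then show ?thesis by linarith
qed

lemma proximity_on_potential_minus_metric:
  assumes "metric_on A d"
    and row_sums: "\<And>x. x \<in> A \<Longrightarrow> (\<Sum>t\<in>A. f x + f t - d x t + c) = \<Sigma>"
  shows "proximity_on \<Sigma> A (\<lambda>x y. f x + f y - d x y + c)"
  unfolding proximity_on_def
proof (intro conjI ballI impI)
  fix x y z assume "x \<in> A" "y \<in> A" "z \<in> A"
  with assms(1) have "d x y + d x z - d y z \<ge> 0" and "d x x = 0"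
    by (simp_all add: metric_on_def)
  then show "f x + f y - d x y + c + (f x + f z - d x z + c) - (f y + f z - d y z + c)
      \<le> f x + f x - d x x + c"
    by linarith
next
  fix x y assume "x \<in> A" "y \<in> A" "x \<noteq> y"
  with assms(1) have "d x y > 0" and "d x x = 0" and "d y y = 0"
    by (simp_all add: metric_on_pos metric_on_def)
  then show "f x + f y - d x y + c + (f x + f y - d x y + c) - (f y + f y - d y y + c)
      < f x + f x - d x x + c"
    by linarith
qed (use row_sums in simp)

lemma sum_dist_eq_card_times_avg_dist:
  assumes "finite A" and "A \<noteq> {}"
  shows "(\<Sum>t\<in>A. d x t) = real (card A) * avg_dist A d x"
  using assms by (simp add: avg_dist_def)

lemma sum_avg_dist_eq_card_times_avg_all:
  assumes "finite A" and "A \<noteq> {}"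
  shows "(\<Sum>t\<in>A. avg_dist A d t) = real (card A) * avg_all A d"
  using assms by (simp add: avg_dist_def avg_all_def sum_divide_distrib[symmetric] power2_eq_square)

lemma sum_double_centered_row:
  assumes "finite A" and "A \<noteq> {}"
  shows "(\<Sum>t\<in>A. avg_dist A d x + avg_dist A d t - d x t + (c - avg_all A d))
    = real (card A) * c"
  using assms
  by (simp add: sum.distrib sum_subtractf sum_dist_eq_card_times_avg_dist
      sum_avg_dist_eq_card_times_avg_all algebra_simps)

theorem proposition2:
  fixes A :: "'a set" and \<Sigma> :: real and d :: "'a \<Rightarrow> 'a \<Rightarrow> real"
  assumes "finite A" and "A \<noteq> {}"
    and "metric_on A d"
  shows "proximity_on \<Sigma> A
           (\<lambda>x y. avg_dist A d x + avg_dist A d y - d x y - avg_all A d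
                  + \<Sigma> / real (card A))"
proof -
  let ?c = "\<Sigma> / real (card A) - avg_all A d"
  have "card A > 0"
    using assms(1,2) card_gt_0_iff by blast
  then have "(\<Sum>t\<in>A. avg_dist A d x + avg_dist A d t - d x t + ?c) = \<Sigma>" for x
    using sum_double_centered_row[OF assms(1,2), of d x "\<Sigma> / real (card A)"] by simp
  then have "proximity_on \<Sigma> A (\<lambda>x y. avg_dist A d x + avg_dist A d y - d x y + ?c)"
    by (rule proximity_on_potential_minus_metric[OF assms(3)])
  moreover have "(\<lambda>x y. avg_dist A d x + avg_dist A d y - d x y + ?c)
      = (\<lambda>x y. avg_dist A d x + avg_dist A d y - d x y - avg_all A d + \<Sigma> / real (card A))"
    by (simp add: fun_eq_iff)
  ultimately show ?thesis
    by simp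
qed

end
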